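(* Let $G$ be a finite group and let $\mathsf{T}$ be a $G$-transfer system. Then any two minimal generating sets of $\mathsf{T}$ have the same cardinality. Consequently there is a well-defined map $\mathfrak{m}$ from the set of $G$-transfer systems to $\mathbb{N}$ sending a transfer system $\mathsf{T}$ to the cardinality of a minimal generating set of $\mathsf{T}$.
   Context: For a finite group $G$, an arrow is a pair $(H,K)$ of subgroups of $G$ with $H \leqslant K$; it is an identity arrow if $H=K$. A $G$-transfer system is a set $\mathsf{T}$ of arrows which contains all identity arrows and is closed under: composition (if $(H,K),(K,L)\in\mathsf{T}$ then $(H,L)\in\mathsf{T}$); conjugation (if $(H,K)\in\mathsf{T}$ then $(gHg^{-1},gKg^{-1})\in\mathsf{T}$ for all $g\in G$); restriction (if $(H,K)\in\mathsf{T}$ and $L\leqslant K$ then $(H\cap L,L)\in\mathsf{T}$). For a set $S$ of non-identity arrows, $\langle S\rangle$ denotes the smallest $G$-transfer system containing $S$. A minimal generating set for a transfer system $\mathsf{T}$ is a set $S\subseteq\mathsf{T}$ of non-identity arrows with $\langle S\rangle=\mathsf{T}$ and $\langle S\setminus\{s\}\rangle\subsetneq\mathsf{T}$ for every $s\in S$. *)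

theory Defs
  imports "HOL-Algebra.Group"
begin

definition conj_sub :: "('a, 'b) monoid_scheme \<Rightarrow> 'a \<Rightarrow> 'a set \<Rightarrow> 'a set" where
  "conj_sub G g H = {g \<otimes>\<^bsub>G\<^esub> h \<otimes>\<^bsub>G\<^esub> inv\<^bsub>G\<^esub> g | h. h \<in> H}"

definition arrows :: "('a, 'b) monoid_scheme \<Rightarrow> ('a set \<times> 'a set) set" where
  "arrows G = {(H, K). subgroup H G \<and> subgroup K G \<and> H \<subseteq> K}"

definition transfer_system :: "('a, 'b) monoid_scheme \<Rightarrow> ('a set \<times> 'a set) set \<Rightarrow> bool" where
  "transfer_system G T \<longleftrightarrow>
     T \<subseteq> arrows G
   \<and> (\<forall>H. subgroup H G \<longrightarrow> (H, H) \<in> T)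
   \<and> (\<forall>H K L. (H, K) \<in> T \<longrightarrow> (K, L) \<in> T \<longrightarrow> (H, L) \<in> T)
   \<and> (\<forall>H K g. (H, K) \<in> T \<longrightarrow> g \<in> carrier G \<longrightarrow> (conj_sub G g H, conj_sub G g K) \<in> T)
   \<and> (\<forall>H K L. (H, K) \<in> T \<longrightarrow> subgroup L G \<longrightarrow> L \<subseteq> K \<longrightarrow> (H \<inter> L, L) \<in> T)"

definition generated_ts :: "('a, 'b) monoid_scheme \<Rightarrow> ('a set \<times> 'a set) set \<Rightarrow> ('a set \<times> 'a set) set" where
  "generated_ts G S = \<Inter> {T. transfer_system G T \<and> S \<subseteq> T}"

definition minimal_generating_set ::
  "('a, 'b) monoid_scheme \<Rightarrow> ('a set \<times> 'a set) set \<Rightarrow> ('a set \<times> 'a set) set \<Rightarrow> bool" where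
  "minimal_generating_set G T S \<longleftrightarrow>
     S \<subseteq> T
   \<and> (\<forall>(H, K) \<in> S. H \<noteq> K)
   \<and> generated_ts G S = T
   \<and> (\<forall>s \<in> S. generated_ts G (S - {s}) \<subset> T)"

end

theory Submission
  imports Defs "HOL-Algebra.Group_Action"
begin

(* Call an arrow of T indecomposable if it is not an identity and has no proper factorisation
   (H, Y), (Y, K) inside T, and write a <= b if a is a restriction of a conjugate of b.
   Every arrow of T is a composite of indecomposables, so S \<subseteq> T generates T exactly when
   every indecomposable lies below some element of S. The indecomposables that are maximal for <=
   and lie below a fixed arrow of T are all conjugate. Hence for a minimal generating set S each
   s \<in> S lies above a maximal indecomposable that lies below no other element of S, and sending s
   to the maximal indecomposables below it is a bijection from S onto the conjugacy classes of
   maximal indecomposables, whose number depends only on T. *)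

section \<open>Conjugation and the restriction order on arrows\<close>

definition conj_arrow :: "('a, 'b) monoid_scheme \<Rightarrow> 'a \<Rightarrow> 'a set \<times> 'a set \<Rightarrow> 'a set \<times> 'a set" where
  "conj_arrow G g a = (conj_sub G g (fst a), conj_sub G g (snd a))"

definition arrow_le :: "('a, 'b) monoid_scheme \<Rightarrow> 'a set \<times> 'a set \<Rightarrow> 'a set \<times> 'a set \<Rightarrow> bool" where
  "arrow_le G a b \<longleftrightarrow> (\<exists>g\<in>carrier G. \<exists>L. subgroup L G \<and> L \<subseteq> conj_sub G g (snd b)
      \<and> a = (conj_sub G g (fst b) \<inter> L, L))"

lemma conj_sub_eq_image: "conj_sub G g A = (\<lambda>a. g \<otimes>\<^bsub>G\<^esub> a \<otimes>\<^bsub>G\<^esub> inv\<^bsub>G\<^esub> g) ` A"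
  unfolding conj_sub_def by auto

lemma arrow_le_identity: "arrow_le G a (H, H) \<Longrightarrow> fst a = snd a"
  unfolding arrow_le_def by auto

context group
begin

lemma conj_sub_subset_carrier: "A \<subseteq> carrier G \<Longrightarrow> g \<in> carrier G \<Longrightarrow> conj_sub G g A \<subseteq> carrier G"
  by (auto simp: conj_sub_eq_image)

lemma conj_sub_mono: "A \<subseteq> B \<Longrightarrow> conj_sub G g A \<subseteq> conj_sub G g B"
  by (auto simp: conj_sub_eq_image)

lemma conj_sub_conj_sub:
  assumes "A \<subseteq> carrier G" "g \<in> carrier G" "h \<in> carrier G"
  shows "conj_sub G h (conj_sub G g A) = conj_sub G (h \<otimes> g) A"
  unfolding conj_sub_eq_image image_image
  using assms by (intro image_cong) (auto simp: inv_mult_group m_assoc)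

lemma conj_sub_one: "A \<subseteq> carrier G \<Longrightarrow> conj_sub G \<one> A = A"
  by (auto simp: conj_sub_eq_image subset_iff)

lemma conj_sub_inv_conj_sub:
  "A \<subseteq> carrier G \<Longrightarrow> g \<in> carrier G \<Longrightarrow> conj_sub G (inv g) (conj_sub G g A) = A"
  by (simp add: conj_sub_conj_sub conj_sub_one)

lemma conj_sub_conj_sub_inv:
  "A \<subseteq> carrier G \<Longrightarrow> g \<in> carrier G \<Longrightarrow> conj_sub G g (conj_sub G (inv g) A) = A"
  using conj_sub_inv_conj_sub[of A "inv g"] by simp

lemma inj_on_conjugation: "A \<subseteq> carrier G \<Longrightarrow> g \<in> carrier G \<Longrightarrow> inj_on (\<lambda>a. g \<otimes> a \<otimes> inv g) A"
  by (auto simp: inj_on_def subset_iff)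

lemma conj_sub_Int:
  "A \<subseteq> carrier G \<Longrightarrow> B \<subseteq> carrier G \<Longrightarrow> g \<in> carrier G
   \<Longrightarrow> conj_sub G g (A \<inter> B) = conj_sub G g A \<inter> conj_sub G g B"
  unfolding conj_sub_eq_image by (rule inj_on_image_Int[OF inj_on_conjugation[of "A \<union> B"]]) auto

lemma conj_sub_eq_coset: "H \<subseteq> carrier G \<Longrightarrow> g \<in> carrier G \<Longrightarrow> conj_sub G g H = g <# H #> inv g"
  by (force simp: conj_sub_def l_coset_def r_coset_def m_assoc subset_iff)

lemma subgroup_conj_sub: "subgroup H G \<Longrightarrow> g \<in> carrier G \<Longrightarrow> subgroup (conj_sub G g H) G"
  by (simp add: conj_sub_eq_coset subgroup.subset subgroup_conjugation_is_surj2)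

lemma card_conj_sub: "A \<subseteq> carrier G \<Longrightarrow> g \<in> carrier G \<Longrightarrow> card (conj_sub G g A) = card A"
  unfolding conj_sub_eq_image by (rule card_image[OF inj_on_conjugation])

lemma arrows_subset_carrier: "(A, B) \<in> arrows G \<Longrightarrow> A \<subseteq> carrier G \<and> B \<subseteq> carrier G"
  unfolding arrows_def using subgroup.subset by auto

lemma conj_arrow_arrows: "b \<in> arrows G \<Longrightarrow> g \<in> carrier G \<Longrightarrow> conj_arrow G g b \<in> arrows G"
  by (auto simp: arrows_def conj_arrow_def subgroup_conj_sub intro!: conj_sub_mono)

lemma conj_arrow_inv_conj_arrow:
  "b \<in> arrows G \<Longrightarrow> g \<in> carrier G \<Longrightarrow> conj_arrow G (inv g) (conj_arrow G g b) = b"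
  using arrows_subset_carrier[of "fst b" "snd b"]
  by (simp add: conj_arrow_def conj_sub_inv_conj_sub)

lemma arrow_le_refl: "b \<in> arrows G \<Longrightarrow> arrow_le G b b"
  unfolding arrow_le_def
  by (rule bexI[of _ \<one>], rule exI[of _ "snd b"]) (auto simp: arrows_def conj_sub_one subgroup.subset)

lemma arrow_le_restrict:
  assumes "(A, B) \<in> arrows G" "subgroup L G" "L \<subseteq> B"
  shows "arrow_le G (A \<inter> L, L) (A, B)"
  using assms arrows_subset_carrier[OF assms(1)] unfolding arrow_le_def
  by (intro bexI[of _ \<one>] exI[of _ L]) (auto simp: conj_sub_one)

lemma conj_arrow_arrow_le: "b \<in> arrows G \<Longrightarrow> g \<in> carrier G \<Longrightarrow> arrow_le G (conj_arrow G g b) b"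
  using conj_arrow_arrows[of b g] unfolding arrow_le_def arrows_def conj_arrow_def
  by (intro bexI[of _ g] exI[of _ "conj_sub G g (snd b)"]) auto

lemma arrow_le_conj_arrow: "b \<in> arrows G \<Longrightarrow> g \<in> carrier G \<Longrightarrow> arrow_le G b (conj_arrow G g b)"
  using conj_arrow_arrow_le[OF conj_arrow_arrows, of b g "inv g"]
  by (simp add: conj_arrow_inv_conj_arrow)

lemma arrow_le_trans:
  assumes ab: "arrow_le G a b" and bc: "arrow_le G b c" and c: "c \<in> arrows G"
  shows "arrow_le G a c"
proof -
  obtain H K where c_eq: "c = (H, K)" by force
  have H: "H \<subseteq> carrier G" and K: "K \<subseteq> carrier G" using c c_eq arrows_subset_carrier by auto
  obtain g L where g: "g \<in> carrier G" and L: "subgroup L G" "L \<subseteq> conj_sub G g K"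
    and b: "b = (conj_sub G g H \<inter> L, L)" using bc unfolding arrow_le_def c_eq by auto
  obtain h M where h: "h \<in> carrier G" and M: "subgroup M G" "M \<subseteq> conj_sub G h L"
    and a: "a = (conj_sub G h (conj_sub G g H \<inter> L) \<inter> M, M)" using ab unfolding arrow_le_def b by auto
  have "conj_sub G h (conj_sub G g H \<inter> L) = conj_sub G (h \<otimes> g) H \<inter> conj_sub G h L"
    using L g h H by (simp add: conj_sub_Int conj_sub_subset_carrier conj_sub_conj_sub subgroup.subset)
  then have "a = (conj_sub G (h \<otimes> g) H \<inter> M, M)" using a M(2) by auto
  moreover have "M \<subseteq> conj_sub G (h \<otimes> g) K"
    using M(2) conj_sub_mono[OF L(2), of h] conj_sub_conj_sub[OF K g h] by auto
  ultimately show ?thesis unfolding arrow_le_def c_eq using g h M(1) by auto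
qed

end

section \<open>Transfer systems\<close>

lemma transfer_system_arrows: "transfer_system G T \<Longrightarrow> T \<subseteq> arrows G"
  unfolding transfer_system_def by auto

lemma transfer_system_id: "transfer_system G T \<Longrightarrow> subgroup H G \<Longrightarrow> (H, H) \<in> T"
  unfolding transfer_system_def by auto

lemma transfer_system_trans: "transfer_system G T \<Longrightarrow> (H, K) \<in> T \<Longrightarrow> (K, L) \<in> T \<Longrightarrow> (H, L) \<in> T"
  unfolding transfer_system_def by blast

lemma transfer_system_conj:
  "transfer_system G T \<Longrightarrow> (H, K) \<in> T \<Longrightarrow> g \<in> carrier G \<Longrightarrow> (conj_sub G g H, conj_sub G g K) \<in> T"
  unfolding transfer_system_def by blast

lemma transfer_system_conj_arrow:
  "transfer_system G T \<Longrightarrow> b \<in> T \<Longrightarrow> g \<in> carrier G \<Longrightarrow> conj_arrow G g b \<in> T"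
  by (cases b) (simp add: conj_arrow_def transfer_system_conj)

lemma transfer_system_restrict:
  "transfer_system G T \<Longrightarrow> (H, K) \<in> T \<Longrightarrow> subgroup L G \<Longrightarrow> L \<subseteq> K \<Longrightarrow> (H \<inter> L, L) \<in> T"
  unfolding transfer_system_def by blast

lemma transfer_system_arrow_le_closed:
  "transfer_system G T \<Longrightarrow> b \<in> T \<Longrightarrow> arrow_le G a b \<Longrightarrow> a \<in> T"
  unfolding arrow_le_def
  by (auto intro: transfer_system_restrict transfer_system_conj_arrow[of G T b, unfolded conj_arrow_def])

lemma transfer_systemI:
  assumes "T \<subseteq> arrows G"
    and "\<And>H. subgroup H G \<Longrightarrow> (H, H) \<in> T"
    and "\<And>H K L. (H, K) \<in> T \<Longrightarrow> (K, L) \<in> T \<Longrightarrow> (H, L) \<in> T"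
    and "\<And>b g. b \<in> T \<Longrightarrow> g \<in> carrier G \<Longrightarrow> conj_arrow G g b \<in> T"
    and "\<And>H K L. (H, K) \<in> T \<Longrightarrow> subgroup L G \<Longrightarrow> L \<subseteq> K \<Longrightarrow> (H \<inter> L, L) \<in> T"
  shows "transfer_system G T"
  unfolding transfer_system_def
proof (intro conjI allI impI)
  fix H K g assume "(H, K) \<in> T" "g \<in> carrier G"
  then show "(conj_sub G g H, conj_sub G g K) \<in> T" using assms(4)[of "(H, K)" g] by (simp add: conj_arrow_def)
next
  fix H K L assume "(H, K) \<in> T" "(K, L) \<in> T"
  then show "(H, L) \<in> T" by (rule assms(3))
next
  fix H K L assume "(H, K) \<in> T" "subgroup L G" "L \<subseteq> K"
  then show "(H \<inter> L, L) \<in> T" by (rule assms(5))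
qed (use assms(1,2) in auto)

lemma transfer_system_Inter:
  assumes "F \<noteq> {}" and ts: "\<And>T. T \<in> F \<Longrightarrow> transfer_system G T"
  shows "transfer_system G (\<Inter>F)"
proof (rule transfer_systemI)
  show "\<Inter>F \<subseteq> arrows G"
    using assms(1) by (metis Inter_lower all_not_in_conv order_trans ts transfer_system_arrows)
next
  fix H K L assume "(H, K) \<in> \<Inter>F" "(K, L) \<in> \<Inter>F"
  then show "(H, L) \<in> \<Inter>F" by (auto intro: transfer_system_trans[OF ts])
qed (auto intro: transfer_system_id[OF ts] transfer_system_conj_arrow[OF ts] transfer_system_restrict[OF ts])

lemma generated_ts_least: "transfer_system G T \<Longrightarrow> S \<subseteq> T \<Longrightarrow> generated_ts G S \<subseteq> T"
  unfolding generated_ts_def by auto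

lemma generated_ts_superset: "S \<subseteq> generated_ts G S"
  unfolding generated_ts_def by auto

lemma transfer_system_generated_ts:
  "transfer_system G T \<Longrightarrow> S \<subseteq> T \<Longrightarrow> transfer_system G (generated_ts G S)"
  unfolding generated_ts_def by (rule transfer_system_Inter) blast+

section \<open>Indecomposable arrows\<close>

definition indecomposables :: "('a set \<times> 'a set) set \<Rightarrow> ('a set \<times> 'a set) set" where
  "indecomposables T =
     {(H, K). (H, K) \<in> T \<and> H \<noteq> K \<and> (\<forall>Y. (H, Y) \<in> T \<longrightarrow> (Y, K) \<in> T \<longrightarrow> Y = H \<or> Y = K)}"

definition max_indecomposables ::
  "('a, 'b) monoid_scheme \<Rightarrow> ('a set \<times> 'a set) set \<Rightarrow> ('a set \<times> 'a set) set" where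
  "max_indecomposables G T =
     {j \<in> indecomposables T. \<forall>j' \<in> indecomposables T. arrow_le G j j' \<longrightarrow> arrow_le G j' j}"

text \<open>On maximal indecomposables, \<^const>\<open>arrow_le\<close> is conjugacy, so these sets are its classes.\<close>

definition max_indecomposable_classes ::
  "('a, 'b) monoid_scheme \<Rightarrow> ('a set \<times> 'a set) set \<Rightarrow> ('a set \<times> 'a set) set set" where
  "max_indecomposable_classes G T =
     (\<lambda>m. {m' \<in> max_indecomposables G T. arrow_le G m' m}) ` max_indecomposables G T"

lemma indecomposables_subset: "indecomposables T \<subseteq> T"
  unfolding indecomposables_def by auto

lemma max_indecomposables_subset: "max_indecomposables G T \<subseteq> indecomposables T"
  unfolding max_indecomposables_def by auto

locale finite_transfer_system = group G for G (structure) + fixes T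
  assumes finite_carrier: "finite (carrier G)" and transfer_system: "transfer_system G T"
begin

lemma T_subset_arrows: "T \<subseteq> arrows G"
  using transfer_system by (rule transfer_system_arrows)

lemma T_arrowD:
  "(H, K) \<in> T \<Longrightarrow> subgroup H G \<and> subgroup K G \<and> H \<subseteq> K \<and> H \<subseteq> carrier G \<and> K \<subseteq> carrier G"
  using T_subset_arrows arrows_subset_carrier unfolding arrows_def by blast

lemma finite_T: "finite T"
proof (rule finite_subset)
  show "T \<subseteq> Pow (carrier G) \<times> Pow (carrier G)" using T_arrowD by auto
qed (use finite_carrier in simp)

lemma card_snd_le_if_arrow_le:
  assumes "arrow_le G a b" and "b \<in> arrows G"
  shows "card (snd a) \<le> card (snd b)"
proof -
  obtain g L where g: "g \<in> carrier G" and L: "L \<subseteq> conj_sub G g (snd b)" and a: "snd a = L"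
    using assms(1) unfolding arrow_le_def by auto
  have b: "snd b \<subseteq> carrier G" using assms(2) arrows_subset_carrier[of "fst b" "snd b"] by simp
  have "card L \<le> card (conj_sub G g (snd b))"
    using L finite_subset[OF conj_sub_subset_carrier[OF b g] finite_carrier] by (rule card_mono[rotated])
  then show ?thesis using a card_conj_sub[OF b g] by simp
qed

lemma arrow_le_card_ge_imp_conj_arrow:
  assumes "arrow_le G a b" and "b \<in> arrows G" and "card (snd b) \<le> card (snd a)"
  shows "\<exists>g\<in>carrier G. a = conj_arrow G g b"
proof -
  obtain g L where g: "g \<in> carrier G" and L: "L \<subseteq> conj_sub G g (snd b)"
    and a: "a = (conj_sub G g (fst b) \<inter> L, L)" using assms(1) unfolding arrow_le_def by auto
  have b: "fst b \<subseteq> snd b" "snd b \<subseteq> carrier G"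
    using assms(2) arrows_subset_carrier[of "fst b" "snd b"] unfolding arrows_def by auto
  have "card (conj_sub G g (snd b)) \<le> card L" using assms(3) a card_conj_sub[OF b(2) g] by simp
  then have "L = conj_sub G g (snd b)"
    using L finite_subset[OF conj_sub_subset_carrier[OF b(2) g] finite_carrier] by (simp add: card_seteq)
  then have "a = conj_arrow G g b" using a conj_sub_mono[OF b(1)] unfolding conj_arrow_def by auto
  then show ?thesis using g by blast
qed

lemma not_indecomposable_factor:
  assumes "(H, K) \<in> T" and "H \<noteq> K" and "(H, K) \<notin> indecomposables T"
  obtains Y where "(H, Y) \<in> T" "(Y, K) \<in> T" "card H < card Y" "card Y < card K"
proof -
  obtain Y where HY: "(H, Y) \<in> T" and YK: "(Y, K) \<in> T" and "Y \<noteq> H" "Y \<noteq> K"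
    using assms unfolding indecomposables_def by auto
  moreover have "H \<subseteq> Y" "Y \<subseteq> K" "finite K" "finite Y"
    using T_arrowD[OF HY] T_arrowD[OF YK] finite_subset[OF _ finite_carrier] by auto
  ultimately show ?thesis using that psubset_card_mono by blast
qed

lemma indecomposables_generate:
  assumes D: "transfer_system G D" and "indecomposables T \<subseteq> D"
  shows "T \<subseteq> D"
proof (rule subrelI)
  fix H K assume "(H, K) \<in> T"
  then show "(H, K) \<in> D"
  proof (induction "card K - card H" arbitrary: H K rule: less_induct)
    case less
    consider "H = K" | "(H, K) \<in> indecomposables T"
      | Y where "(H, Y) \<in> T" "(Y, K) \<in> T" "card H < card Y" "card Y < card K"
      using not_indecomposable_factor[OF less.prems] by blast
    then show ?case
    proof cases
      case 1
      then show ?thesis using transfer_system_id[OF D] T_arrowD[OF less.prems] by simp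
    next
      case 2
      then show ?thesis using assms(2) by blast
    next
      case (3 Y)
      then have "(H, Y) \<in> D" "(Y, K) \<in> D" using less.hyps by auto
      then show ?thesis by (rule transfer_system_trans[OF D])
    qed
  qed
qed

lemma indecomposable_conj_arrow:
  assumes j: "j \<in> indecomposables T" and g: "g \<in> carrier G"
  shows "conj_arrow G g j \<in> indecomposables T"
proof -
  obtain A B where j_eq: "j = (A, B)" by force
  have AB: "(A, B) \<in> T" and "A \<noteq> B"
    and no_factor: "\<And>Y. (A, Y) \<in> T \<Longrightarrow> (Y, B) \<in> T \<Longrightarrow> Y = A \<or> Y = B"
    using j unfolding j_eq indecomposables_def by auto
  have A: "A \<subseteq> carrier G" and B: "B \<subseteq> carrier G" using T_arrowD[OF AB] by auto
  let ?c = "conj_sub G g" and ?d = "conj_sub G (inv g)"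
  have "?c A \<noteq> ?c B" using \<open>A \<noteq> B\<close> conj_sub_inv_conj_sub[OF A g] conj_sub_inv_conj_sub[OF B g] by metis
  moreover have "Y = ?c A \<or> Y = ?c B" if "(?c A, Y) \<in> T" "(Y, ?c B) \<in> T" for Y
  proof -
    have "(?d (?c A), ?d Y) \<in> T" "(?d Y, ?d (?c B)) \<in> T"
      using that transfer_system_conj[OF transfer_system _ inv_closed[OF g]] by auto
    then have "?d Y = A \<or> ?d Y = B" using no_factor conj_sub_inv_conj_sub[OF _ g] A B by simp
    moreover have "Y \<subseteq> carrier G" using T_arrowD[OF that(2)] by simp
    ultimately show ?thesis using conj_sub_conj_sub_inv[OF _ g] by metis
  qed
  ultimately show ?thesis using transfer_system_conj[OF transfer_system AB g]
    unfolding j_eq conj_arrow_def indecomposables_def by auto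
qed

lemma max_indecomposable_conj_arrow:
  assumes m: "m \<in> max_indecomposables G T" and g: "g \<in> carrier G"
  shows "conj_arrow G g m \<in> max_indecomposables G T"
proof -
  have mJ: "m \<in> indecomposables T" and m_arrow: "m \<in> arrows G"
    using m max_indecomposables_subset indecomposables_subset T_subset_arrows by blast+
  have gm_arrow: "conj_arrow G g m \<in> arrows G" using conj_arrow_arrows[OF m_arrow g] .
  have "arrow_le G j (conj_arrow G g m)"
    if j: "j \<in> indecomposables T" and gm_j: "arrow_le G (conj_arrow G g m) j" for j
  proof -
    have j_arrow: "j \<in> arrows G" using j indecomposables_subset T_subset_arrows by blast
    have "arrow_le G m j" using arrow_le_trans[OF arrow_le_conj_arrow[OF m_arrow g] gm_j j_arrow] .
    then have "arrow_le G j m" using m j unfolding max_indecomposables_def by blast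
    then show ?thesis using arrow_le_trans[OF _ arrow_le_conj_arrow[OF m_arrow g] gm_arrow] by blast
  qed
  then show ?thesis using indecomposable_conj_arrow[OF mJ g] unfolding max_indecomposables_def by blast
qed

lemma ex_max_indecomposable_above:
  assumes j: "j \<in> indecomposables T"
  shows "\<exists>m\<in>max_indecomposables G T. arrow_le G j m"
proof -
  let ?P = "\<lambda>m. m \<in> indecomposables T \<and> arrow_le G j m"
  have arrow: "m \<in> arrows G" if "m \<in> indecomposables T" for m
    using that indecomposables_subset T_subset_arrows by blast
  have "?P j" using j arrow_le_refl[OF arrow] by blast
  moreover have "card (snd m) < Suc (card (carrier G))" if "?P m" for m
    using that T_arrowD[of "fst m" "snd m"] indecomposables_subset card_mono[OF finite_carrier]
    by (fastforce simp: le_imp_less_Suc)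
  ultimately obtain m where m: "?P m" and greatest: "\<And>m'. ?P m' \<Longrightarrow> card (snd m') \<le> card (snd m)"
    using ex_has_greatest_nat[of ?P j "\<lambda>m. card (snd m)"] by blast
  have "arrow_le G m' m" if m': "m' \<in> indecomposables T" "arrow_le G m m'" for m'
  proof -
    have "arrow_le G j m'" using m arrow_le_trans[OF _ m'(2) arrow[OF m'(1)]] by blast
    then have "card (snd m') \<le> card (snd m)" using greatest m' by blast
    then obtain g where "g \<in> carrier G" "m = conj_arrow G g m'"
      using arrow_le_card_ge_imp_conj_arrow[OF m'(2) arrow[OF m'(1)]] by blast
    then show ?thesis using arrow_le_conj_arrow[OF arrow[OF m'(1)]] by simp
  qed
  then show ?thesis using m unfolding max_indecomposables_def by blast
qed

lemma indecomposable_restriction_factor: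
  assumes HY: "(H, Y) \<in> T" and YK: "(Y, K) \<in> T" and L: "subgroup L G" "L \<subseteq> K"
    and HL: "(H \<inter> L, L) \<in> indecomposables T"
  shows "Y \<inter> L = H \<inter> L \<or> Y \<inter> L = L"
proof -
  have "H \<subseteq> Y" and "subgroup Y G" using T_arrowD[OF HY] by auto
  then have "(H \<inter> (Y \<inter> L), Y \<inter> L) \<in> T"
    using transfer_system_restrict[OF transfer_system HY] subgroups_Inter_pair[OF _ L(1)] by blast
  moreover have "H \<inter> (Y \<inter> L) = H \<inter> L" using \<open>H \<subseteq> Y\<close> by blast
  moreover have "(Y \<inter> L, L) \<in> T" using transfer_system_restrict[OF transfer_system YK L] .
  ultimately show ?thesis using HL unfolding indecomposables_def by auto
qed

lemma max_indecomposable_restriction_of_indecomposable: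
  assumes HK: "(H, K) \<in> indecomposables T" and L: "subgroup L G" "L \<subseteq> K"
    and HL: "(H \<inter> L, L) \<in> max_indecomposables G T"
  shows "L = K"
proof -
  have HK_T: "(H, K) \<in> T" using HK indecomposables_subset by blast
  have HL_T: "(H \<inter> L, L) \<in> T" using HL max_indecomposables_subset indecomposables_subset by blast
  have "arrow_le G (H \<inter> L, L) (H, K)" using arrow_le_restrict[OF _ L] HK_T T_subset_arrows by blast
  then have "arrow_le G (H, K) (H \<inter> L, L)" using HK HL unfolding max_indecomposables_def by blast
  from card_snd_le_if_arrow_le[OF this] have "card K \<le> card L" using HL_T T_subset_arrows by auto
  moreover have "finite K" using T_arrowD[OF HK_T] finite_subset[OF _ finite_carrier] by blast
  ultimately show ?thesis using L(2) by (simp add: card_seteq)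
qed

lemma max_indecomposable_restriction_unique:
  assumes "(H, K) \<in> T"
    and "subgroup L1 G" "L1 \<subseteq> K" "(H \<inter> L1, L1) \<in> max_indecomposables G T"
    and "subgroup L2 G" "L2 \<subseteq> K" "(H \<inter> L2, L2) \<in> max_indecomposables G T"
  shows "H \<subseteq> L1 \<and> L1 = L2"
  using assms
proof (induction "card K - card H" arbitrary: H K L1 L2 rule: less_induct)
  case less
  note HK = less.prems(1) and L1 = less.prems(2-4) and L2 = less.prems(5-7)
  have "H \<noteq> K"
  proof
    assume "H = K"
    then have "(L1, L1) \<in> indecomposables T" using L1 max_indecomposables_subset by (auto simp: Int_absorb1)
    then show False unfolding indecomposables_def by simp
  qed
  show ?case
  proof (cases "(H, K) \<in> indecomposables T")
    case True
    then show ?thesis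
      using max_indecomposable_restriction_of_indecomposable L1 L2 T_arrowD[OF HK] by metis
  next
    case False
    then obtain Y where HY: "(H, Y) \<in> T" and YK: "(Y, K) \<in> T"
      and card: "card H < card Y" "card Y < card K"
      using not_indecomposable_factor HK \<open>H \<noteq> K\<close> by blast
    have "L \<subseteq> Y" if L: "subgroup L G" "L \<subseteq> K" "(H \<inter> L, L) \<in> max_indecomposables G T" for L
    proof (rule ccontr)
      assume "\<not> L \<subseteq> Y"
      then have "Y \<inter> L = H \<inter> L"
        using indecomposable_restriction_factor[OF HY YK L(1,2)] L(3) max_indecomposables_subset by blast
      then have "Y \<subseteq> L" using less.hyps[of K Y] card YK L by auto
      then have "Y \<subseteq> H" using \<open>Y \<inter> L = H \<inter> L\<close> by blast
      moreover have "finite H" using T_arrowD[OF HK] finite_subset[OF _ finite_carrier] by blast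
      ultimately show False using card card_mono by (metis leD)
    qed
    then show ?thesis using less.hyps[of Y H] card HY L1 L2 by auto
  qed
qed

lemma max_indecomposables_below_same_arrow:
  assumes s: "s \<in> T" and m1: "m1 \<in> max_indecomposables G T" and m2: "m2 \<in> max_indecomposables G T"
    and "arrow_le G m1 s" "arrow_le G m2 s"
  shows "arrow_le G m2 m1"
proof -
  obtain H K where s_eq: "s = (H, K)" by force
  have H: "H \<subseteq> carrier G" and K: "K \<subseteq> carrier G" using T_arrowD s s_eq by auto
  obtain g1 L1 where g1: "g1 \<in> carrier G" and L1: "subgroup L1 G" "L1 \<subseteq> conj_sub G g1 K"
    and m1_eq: "m1 = (conj_sub G g1 H \<inter> L1, L1)" using assms(4) unfolding arrow_le_def s_eq by auto
  obtain g2 L2 where g2: "g2 \<in> carrier G" and L2: "subgroup L2 G" "L2 \<subseteq> conj_sub G g2 K"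
    and m2_eq: "m2 = (conj_sub G g2 H \<inter> L2, L2)" using assms(5) unfolding arrow_le_def s_eq by auto
  have s1: "(conj_sub G g1 H, conj_sub G g1 K) \<in> T" and s2: "(conj_sub G g2 H, conj_sub G g2 K) \<in> T"
    using transfer_system_conj[OF transfer_system] s s_eq g1 g2 by auto
  have "conj_sub G g1 H \<subseteq> L1" using max_indecomposable_restriction_unique[OF s1 L1 _ L1] m1 m1_eq by simp
  then have m1_eq': "m1 = (conj_sub G g1 H, L1)" using m1_eq by auto
  have "conj_sub G g2 H \<subseteq> L2" using max_indecomposable_restriction_unique[OF s2 L2 _ L2] m2 m2_eq by simp
  then have m2_eq': "m2 = (conj_sub G g2 H, L2)" using m2_eq by auto
  define h where "h = g2 \<otimes> inv g1"
  have h: "h \<in> carrier G" unfolding h_def using g1 g2 by simp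
  have h_g1: "conj_sub G h (conj_sub G g1 X) = conj_sub G g2 X" if "X \<subseteq> carrier G" for X
    using conj_sub_conj_sub[OF that g1 h] g1 g2 by (simp add: h_def m_assoc)
  have hm1: "conj_arrow G h m1 = (conj_sub G g2 H, conj_sub G h L1)"
    unfolding conj_arrow_def m1_eq' using h_g1[OF H] by simp
  have "conj_arrow G h m1 \<in> max_indecomposables G T" using max_indecomposable_conj_arrow[OF m1 h] .
  moreover have "conj_sub G g2 H \<subseteq> conj_sub G h L1"
    using conj_sub_mono[OF \<open>conj_sub G g1 H \<subseteq> L1\<close>, of h] h_g1[OF H] by simp
  ultimately have "(conj_sub G g2 H \<inter> conj_sub G h L1, conj_sub G h L1) \<in> max_indecomposables G T"
    using hm1 by (simp add: Int_absorb2)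
  moreover have "subgroup (conj_sub G h L1) G" using subgroup_conj_sub[OF L1(1) h] .
  moreover have "conj_sub G h L1 \<subseteq> conj_sub G g2 K" using conj_sub_mono[OF L1(2), of h] h_g1[OF K] by simp
  ultimately have "L2 = conj_sub G h L1"
    using max_indecomposable_restriction_unique[OF s2 L2 _] m2 m2_eq by blast
  then have "m2 = conj_arrow G h m1" using m2_eq' hm1 by simp
  then show ?thesis
    using conj_arrow_arrow_le[OF _ h] m1 max_indecomposables_subset indecomposables_subset T_subset_arrows
    by blast
qed

lemma max_indecomposables_below_eq:
  assumes "s \<in> T" and m: "m \<in> max_indecomposables G T" and "arrow_le G m s"
  shows "{m' \<in> max_indecomposables G T. arrow_le G m' s} = {m' \<in> max_indecomposables G T. arrow_le G m' m}"
  using max_indecomposables_below_same_arrow[OF assms(1) m _ assms(3)] arrow_le_trans[OF _ assms(3)]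
    assms(1) T_subset_arrows by blast

section \<open>Generating sets\<close>

lemma indecomposable_below_composite:
  assumes j: "j \<in> indecomposables T" and "arrow_le G j (A, C)"
    and AB: "(A, B) \<in> T" and BC: "(B, C) \<in> T"
  shows "arrow_le G j (A, B) \<or> arrow_le G j (B, C)"
proof -
  obtain g L where g: "g \<in> carrier G" and L: "subgroup L G" "L \<subseteq> conj_sub G g C"
    and j_eq: "j = (conj_sub G g A \<inter> L, L)" using assms(2) unfolding arrow_le_def by auto
  have "(conj_sub G g A, conj_sub G g B) \<in> T" "(conj_sub G g B, conj_sub G g C) \<in> T"
    using transfer_system_conj[OF transfer_system _ g] AB BC by auto
  then have "conj_sub G g B \<inter> L = conj_sub G g A \<inter> L \<or> conj_sub G g B \<inter> L = L"
    using indecomposable_restriction_factor L j j_eq by blast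
  then show ?thesis
  proof
    assume "conj_sub G g B \<inter> L = conj_sub G g A \<inter> L"
    then have "arrow_le G j (B, C)" unfolding arrow_le_def using g L j_eq by auto
    then show ?thesis ..
  next
    assume "conj_sub G g B \<inter> L = L"
    then have "arrow_le G j (A, B)" unfolding arrow_le_def using g L j_eq by auto
    then show ?thesis ..
  qed
qed

lemma generating_set_covers_indecomposables:
  assumes S: "S \<subseteq> T" "generated_ts G S = T" and j: "j \<in> indecomposables T"
  shows "\<exists>s\<in>S. arrow_le G j s"
proof -
  define T' where "T' = {a \<in> T. \<forall>j\<in>indecomposables T. arrow_le G j a \<longrightarrow> (\<exists>s\<in>S. arrow_le G j s)}"
  have T'_down: "c \<in> T'" if "a \<in> T'" "c \<in> T" "arrow_le G c a" for a c
    using that arrow_le_trans T_subset_arrows unfolding T'_def by blast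
  have "transfer_system G T'"
  proof (rule transfer_systemI)
    show "T' \<subseteq> arrows G" using T_subset_arrows unfolding T'_def by auto
  next
    fix H assume "subgroup H G"
    then show "(H, H) \<in> T'"
      using transfer_system_id[OF transfer_system] arrow_le_identity
      unfolding T'_def indecomposables_def by fastforce
  next
    fix A B C assume AB: "(A, B) \<in> T'" and BC: "(B, C) \<in> T'"
    then have "(A, B) \<in> T" "(B, C) \<in> T" unfolding T'_def by auto
    then show "(A, C) \<in> T'"
      using transfer_system_trans[OF transfer_system] indecomposable_below_composite AB BC
      unfolding T'_def by blast
  next
    fix b g assume "b \<in> T'" "g \<in> carrier G"
    then show "conj_arrow G g b \<in> T'"
      using T'_down transfer_system_conj_arrow[OF transfer_system] conj_arrow_arrow_le T_subset_arrows
      unfolding T'_def by blast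
  next
    fix H K L assume "(H, K) \<in> T'" "subgroup L G" "L \<subseteq> K"
    then show "(H \<inter> L, L) \<in> T'"
      using T'_down transfer_system_restrict[OF transfer_system] arrow_le_restrict T_subset_arrows
      unfolding T'_def by blast
  qed
  moreover have "S \<subseteq> T'" using S(1) unfolding T'_def by blast
  ultimately have "T \<subseteq> T'" using generated_ts_least S(2) by metis
  then show ?thesis
    using j indecomposables_subset arrow_le_refl T_subset_arrows unfolding T'_def by blast
qed

lemma generated_ts_eq_if_covers_indecomposables:
  assumes "S \<subseteq> T" and cover: "\<forall>j\<in>indecomposables T. \<exists>s\<in>S. arrow_le G j s"
  shows "generated_ts G S = T"
proof
  show "generated_ts G S \<subseteq> T" using generated_ts_least[OF transfer_system assms(1)] .
  have ts: "transfer_system G (generated_ts G S)" using transfer_system_generated_ts[OF transfer_system assms(1)] .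
  have "indecomposables T \<subseteq> generated_ts G S"
    using cover generated_ts_superset transfer_system_arrow_le_closed[OF ts] by blast
  then show "T \<subseteq> generated_ts G S" using indecomposables_generate[OF ts] by blast
qed

lemma minimal_generating_set_private_max_indecomposable:
  assumes S: "minimal_generating_set G T S" and s: "s \<in> S"
  obtains m where "m \<in> max_indecomposables G T" "arrow_le G m s" "\<forall>s'\<in>S. arrow_le G m s' \<longrightarrow> s' = s"
proof -
  have ST: "S \<subseteq> T" and gen: "generated_ts G S = T" and strict: "generated_ts G (S - {s}) \<subset> T"
    using S s unfolding minimal_generating_set_def by auto
  have "\<exists>p\<in>indecomposables T. arrow_le G p s \<and> (\<forall>s'\<in>S. arrow_le G p s' \<longrightarrow> s' = s)"
  proof (rule ccontr)
    assume "\<not> ?thesis"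
    then have "\<forall>j\<in>indecomposables T. \<exists>s'\<in>S - {s}. arrow_le G j s'"
      using generating_set_covers_indecomposables[OF ST gen] by (metis Diff_iff singletonD)
    then have "generated_ts G (S - {s}) = T"
      using generated_ts_eq_if_covers_indecomposables ST by blast
    with strict show False by simp
  qed
  then obtain p where p: "p \<in> indecomposables T" "arrow_le G p s"
    and p_private: "\<And>s'. s' \<in> S \<Longrightarrow> arrow_le G p s' \<Longrightarrow> s' = s" by blast
  obtain m where m: "m \<in> max_indecomposables G T" and pm: "arrow_le G p m"
    using ex_max_indecomposable_above[OF p(1)] by blast
  have m_private: "s' = s" if "s' \<in> S" "arrow_le G m s'" for s'
    using p_private[OF that(1) arrow_le_trans[OF pm that(2)]] that(1) ST T_subset_arrows by blast
  obtain s'' where "s'' \<in> S" "arrow_le G m s''"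
    using generating_set_covers_indecomposables[OF ST gen] m max_indecomposables_subset by blast
  with m_private have "arrow_le G m s" by blast
  with m m_private show ?thesis using that by blast
qed

lemma bij_betw_minimal_generating_set_classes:
  assumes S: "minimal_generating_set G T S"
  shows "bij_betw (\<lambda>s. {m \<in> max_indecomposables G T. arrow_le G m s}) S (max_indecomposable_classes G T)"
proof (rule bij_betw_imageI)
  have ST: "S \<subseteq> T" and gen: "generated_ts G S = T" using S unfolding minimal_generating_set_def by auto
  show "inj_on (\<lambda>s. {m \<in> max_indecomposables G T. arrow_le G m s}) S"
  proof (rule inj_onI)
    fix s1 s2 assume s1: "s1 \<in> S" and s2: "s2 \<in> S"
      and eq: "{m \<in> max_indecomposables G T. arrow_le G m s1} = {m \<in> max_indecomposables G T. arrow_le G m s2}"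
    obtain m where "m \<in> max_indecomposables G T" "arrow_le G m s1" "\<forall>s'\<in>S. arrow_le G m s' \<longrightarrow> s' = s1"
      using minimal_generating_set_private_max_indecomposable[OF S s1] by blast
    then show "s1 = s2" using eq s2 by blast
  qed
  show "(\<lambda>s. {m \<in> max_indecomposables G T. arrow_le G m s}) ` S = max_indecomposable_classes G T"
  proof (intro equalityI subsetI)
    fix c assume "c \<in> (\<lambda>s. {m \<in> max_indecomposables G T. arrow_le G m s}) ` S"
    then obtain s where s: "s \<in> S" and c: "c = {m \<in> max_indecomposables G T. arrow_le G m s}" by blast
    obtain m where "m \<in> max_indecomposables G T" "arrow_le G m s"
      using minimal_generating_set_private_max_indecomposable[OF S s] by blast
    then show "c \<in> max_indecomposable_classes G T"
      unfolding c max_indecomposable_classes_def using max_indecomposables_below_eq s ST by blast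
  next
    fix c assume "c \<in> max_indecomposable_classes G T"
    then obtain m where m: "m \<in> max_indecomposables G T"
      and c: "c = {m' \<in> max_indecomposables G T. arrow_le G m' m}"
      unfolding max_indecomposable_classes_def by blast
    obtain s where "s \<in> S" "arrow_le G m s"
      using generating_set_covers_indecomposables[OF ST gen] m max_indecomposables_subset by blast
    then show "c \<in> (\<lambda>s. {m \<in> max_indecomposables G T. arrow_le G m s}) ` S"
      unfolding c using max_indecomposables_below_eq[OF _ m] ST by blast
  qed
qed

lemma card_minimal_generating_set:
  "minimal_generating_set G T S \<Longrightarrow> card S = card (max_indecomposable_classes G T)"
  by (rule bij_betw_same_card[OF bij_betw_minimal_generating_set_classes])

lemma ex_minimal_generating_set: "\<exists>S. minimal_generating_set G T S"
proof -
  let ?generating = "\<lambda>S. S \<subseteq> T \<and> (\<forall>(H, K)\<in>S. H \<noteq> K) \<and> generated_ts G S = T"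
  have "generated_ts G (indecomposables T) = T"
    using generated_ts_eq_if_covers_indecomposables[OF indecomposables_subset]
      indecomposables_subset arrow_le_refl T_subset_arrows by blast
  moreover have "\<forall>(H, K)\<in>indecomposables T. H \<noteq> K" unfolding indecomposables_def by blast
  ultimately have J_generating: "?generating (indecomposables T)" using indecomposables_subset by blast
  obtain S where S: "?generating S" and least: "\<And>S'. ?generating S' \<Longrightarrow> card S \<le> card S'"
    using ex_has_least_nat[of ?generating _ card, OF J_generating] by auto
  have "finite S" using S finite_T finite_subset by blast
  have "generated_ts G (S - {s}) \<subset> T" if s: "s \<in> S" for s
  proof -
    have "generated_ts G (S - {s}) \<subseteq> T" using generated_ts_least[OF transfer_system] S by blast
    moreover have "\<not> ?generating (S - {s})"
    proof
      assume "?generating (S - {s})"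
      from least[OF this] show False using card_Diff1_less[OF \<open>finite S\<close> s] by linarith
    qed
    ultimately show ?thesis using S by blast
  qed
  then have "minimal_generating_set G T S" using S unfolding minimal_generating_set_def by blast
  then show ?thesis ..
qed

end

theorem corollary2p14:
  fixes G :: "('a, 'b) monoid_scheme" and T :: "('a set \<times> 'a set) set"
  assumes "group G" and "finite (carrier G)" and "transfer_system G T"
  shows "(\<exists>S. minimal_generating_set G T S)
       \<and> (\<forall>S1 S2. minimal_generating_set G T S1 \<longrightarrow> minimal_generating_set G T S2
                 \<longrightarrow> card S1 = card S2)"
proof -
  interpret finite_transfer_system G T
    using assms by (simp add: finite_transfer_system_def finite_transfer_system_axioms_def)
  show ?thesis using ex_minimal_generating_set card_minimal_generating_set by simp
qed

end
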